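(* Let $T^2=\mathbb R^2/\mathbb Z^2$ and let $f\colon T^2\to T^2$ be $f([x])=[Ax]$ with $A=\begin{pmatrix}2&1\\1&1\end{pmatrix}$. Let $K\subseteq T^2$ be the orbit of a periodic point of $f$. Then $K$ is dynamically isolated for $f$, and the restriction of $f$ to $T^2\setminus K$ is metric-independent expansive.
   Context: A set $K$ invariant under a homeomorphism $f$ is dynamically isolated if there exists an open set $U\supseteq K$ with $\bigcap_{n\in\mathbb Z}f^n(U)=K$. A homeomorphism of a metrizable space is metric-independent expansive if for every compatible metric $\rho$ there is $c>0$ such that for all $x\neq y$ there exists $n\in\mathbb Z$ with $\rho(f^n(x),f^n(y))>c$. *)

theory Defs
  imports "HOL-Analysis.Analysis"
begin

text \<open>The torus T^2 = R^2/Z^2, realised (homeomorphically, via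
  [(x,y)] \<mapsto> (exp(2 pi i x), exp(2 pi i y))) as S^1 \<times> S^1 in C \<times> C.\<close>
definition torus :: "(complex \<times> complex) set" where
  "torus = {(z, w). cmod z = 1 \<and> cmod w = 1}"

definition torus_top :: "(complex \<times> complex) topology" where
  "torus_top = subtopology euclidean torus"

text \<open>The cat map [x] \<mapsto> [A x], A = ((2,1),(1,1)):
  (x,y) \<mapsto> (2x+y, x+y) becomes (z,w) \<mapsto> (z^2 w, z w).\<close>
definition cat_map :: "complex \<times> complex \<Rightarrow> complex \<times> complex" where
  "cat_map p = (fst p ^ 2 * snd p, fst p * snd p)"

definition zpow :: "'a set \<Rightarrow> ('a \<Rightarrow> 'a) \<Rightarrow> int \<Rightarrow> 'a \<Rightarrow> 'a" where
  "zpow S f n = (if n \<ge> 0 then f ^^ nat n else inv_into S f ^^ nat (- n))"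

definition dyn_isolated :: "'a topology \<Rightarrow> ('a \<Rightarrow> 'a) \<Rightarrow> 'a set \<Rightarrow> bool" where
  "dyn_isolated X f K \<longleftrightarrow>
     (\<exists>U. openin X U \<and> K \<subseteq> U \<and> (\<Inter>n::int. zpow (topspace X) f n ` U) = K)"

definition compatible_metric :: "'a topology \<Rightarrow> ('a \<Rightarrow> 'a \<Rightarrow> real) \<Rightarrow> bool" where
  "compatible_metric X d \<longleftrightarrow>
     Metric_space (topspace X) d \<and> Metric_space.mtopology (topspace X) d = X"

definition mi_expansive :: "'a topology \<Rightarrow> ('a \<Rightarrow> 'a) \<Rightarrow> bool" where
  "mi_expansive X f \<longleftrightarrow>
     (\<forall>d. compatible_metric X d \<longrightarrow>
        (\<exists>c>0. \<forall>x\<in>topspace X. \<forall>y\<in>topspace X. x \<noteq> y \<longrightarrow>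
           (\<exists>n::int. d (zpow (topspace X) f n x) (zpow (topspace X) f n y) > c)))"

end

theory Submission
  imports Defs
begin

text \<open>
  The cat map is an expansive homeomorphism of the compact torus: near the fixed point (1, 1) the
  logarithm turns the componentwise quotient of two orbits into a bounded two-sided solution of the
  linear recurrence given by A, and since A is hyperbolic that solution vanishes. The rest holds for
  every finite invariant set K of an expansive homeomorphism f of a compact metric space X.

  An orbit staying close to K is shadowed by an orbit in K, since the sequence of nearby points of K
  jumps by less than the separation of K; by expansivity the orbit lies in K, which gives
  dynamical isolation. Now let d be a compatible metric on X - K and x, y distinct points of X - K.
  Two points close to distinct points of K are pushed apart by f and by its inverse, so if the orbits
  of x and y were only ever apart near K, they would stay apart near K forever and x would lie in K.
  As they must be apart at some time by expansivity, at some time they are apart while one of them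
  lies in a fixed compact set C disjoint from K, and on C a Lebesgue number argument bounds the
  ambient distance by the d-distance.
\<close>

section \<open>Integer iterates of a bijection\<close>

lemma funpow_closed: "(\<And>x. x \<in> X \<Longrightarrow> g x \<in> X) \<Longrightarrow> x \<in> X \<Longrightarrow> (g ^^ n) x \<in> X"
  by (induction n) auto

lemma finite_periodic_orbit:
  assumes "(f ^^ N) p = p" "N > 0"
  shows "finite {(f ^^ k) p |k. True}"
proof -
  have "(f ^^ k) p \<in> (\<lambda>k. (f ^^ k) p) ` {..<N}" for k
  proof (rule image_eqI)
    show "(f ^^ k) p = (f ^^ (k mod N)) p"
      using funpow_mod_eq[OF assms(1)] by simp
    show "k mod N \<in> {..<N}"
      using assms(2) by simp
  qed
  then have "{(f ^^ k) p |k. True} \<subseteq> (\<lambda>k. (f ^^ k) p) ` {..<N}"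
    by blast
  then show ?thesis
    by (rule finite_surj[rotated]) simp
qed

lemma orbit_invariant: "f ` {(f ^^ k) p |k. True} \<subseteq> {(f ^^ k) p |k. True}"
proof -
  have "f ((f ^^ k) p) = (f ^^ Suc k) p" for k
    by simp
  then show ?thesis
    by blast
qed

lemma zpow_0 [simp]: "zpow X f 0 x = x"
  by (simp add: zpow_def)

locale self_bijection =
  fixes X :: "'a set" and f :: "'a \<Rightarrow> 'a"
  assumes bij: "bij_betw f X X"
begin

lemma inj: "inj_on f X" and image_eq: "f ` X = X"
  using bij by (simp_all add: bij_betw_def)

lemma funpow_in: "x \<in> X \<Longrightarrow> (f ^^ n) x \<in> X"
  using image_eq by (auto intro!: funpow_closed)

lemma zpow_in: "x \<in> X \<Longrightarrow> zpow X f n x \<in> X"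
  unfolding zpow_def using image_eq
  by (auto intro!: funpow_closed simp: inv_into_into)

lemma zpow_succ:
  assumes "x \<in> X"
  shows "zpow X f (n + 1) x = f (zpow X f n x)"
proof (cases "n \<ge> 0")
  case True
  then show ?thesis
    by (simp add: zpow_def nat_add_distrib)
next
  case False
  define m where "m = nat (- n - 1)"
  have "(inv_into X f ^^ m) x \<in> X"
    using assms image_eq by (auto intro!: funpow_closed simp: inv_into_into)
  moreover have "nat (- n) = Suc m" "nat (- (n + 1)) = m"
    using False by (simp_all add: m_def)
  ultimately show ?thesis
    using False image_eq by (simp add: zpow_def f_inv_into_f m_def)
qed

lemma zpow_pred:
  assumes "x \<in> X"
  shows "zpow X f (n - 1) x = inv_into X f (zpow X f n x)"
  using zpow_succ[OF assms, of "n - 1"] zpow_in[OF assms, of "n - 1"] inj by simp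

lemma zpow_add:
  assumes "x \<in> X"
  shows "zpow X f m (zpow X f n x) = zpow X f (m + n) x"
proof (induction m rule: int_induct[where k = 0])
  case (step1 i)
  then show ?case
    using zpow_succ zpow_in assms by (metis add.commute add.left_commute)
next
  case (step2 i)
  then show ?case
    using zpow_pred zpow_in assms by (metis diff_add_eq)
qed simp

lemma eq_zpow_if_step:
  assumes "\<And>n. \<kappa> n \<in> X" "\<And>n. \<kappa> (n + 1) = f (\<kappa> n)"
  shows "\<kappa> n = zpow X f n (\<kappa> 0)"
proof (induction n rule: int_induct[where k = 0])
  case (step1 i)
  then show ?case
    using assms zpow_succ by simp
next
  case (step2 i)
  have "\<kappa> (i - 1) = inv_into X f (\<kappa> i)"
    using assms(2)[of "i - 1"] assms(1) inv_into_f_f[OF inj] by simp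
  then show ?case
    using step2 assms(1) zpow_pred by simp
qed simp

lemma mem_Inter_zpow_image:
  assumes "U \<subseteq> X"
  shows "x \<in> (\<Inter>n. zpow X f n ` U) \<longleftrightarrow> x \<in> X \<and> (\<forall>n. zpow X f n x \<in> U)"
proof
  assume x: "x \<in> (\<Inter>n. zpow X f n ` U)"
  have "zpow X f n x \<in> U" for n
  proof -
    obtain u where "u \<in> U" "x = zpow X f (- n) u"
      using x by blast
    then show ?thesis
      using zpow_add[of u n "- n"] assms by auto
  qed
  moreover from this[of 0] have "x \<in> X"
    using assms by auto
  ultimately show "x \<in> X \<and> (\<forall>n. zpow X f n x \<in> U)"
    by blast
next
  assume x: "x \<in> X \<and> (\<forall>n. zpow X f n x \<in> U)"
  have "x \<in> zpow X f n ` U" for n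
  proof
    show "x = zpow X f n (zpow X f (- n) x)"
      using zpow_add[of x n "- n"] x by simp
    show "zpow X f (- n) x \<in> U"
      using x by blast
  qed
  then show "x \<in> (\<Inter>n. zpow X f n ` U)"
    by blast
qed

lemma self_bijection_invariant_subset: "S \<subseteq> X \<Longrightarrow> f ` S = S \<Longrightarrow> self_bijection S f"
  using inj_on_subset[OF inj] by unfold_locales (simp add: bij_betw_def)

lemma zpow_restrict:
  assumes "S \<subseteq> X" "f ` S = S" "x \<in> S"
  shows "zpow S f n x = zpow X f n x"
proof -
  interpret S: self_bijection S f
    using self_bijection_invariant_subset assms(1,2) .
  have inv_eq: "inv_into S f y = inv_into X f y" if "y \<in> S" for y
    using that assms(1,2) by (intro inv_into_f_eq[OF inj, symmetric]) (auto simp: inv_into_into f_inv_into_f)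
  show ?thesis
  proof (induction n rule: int_induct[where k = 0])
    case (step1 i)
    then show ?case
      using assms zpow_succ S.zpow_succ by auto
  next
    case (step2 i)
    then show ?case
      using assms zpow_pred S.zpow_pred S.zpow_in inv_eq by auto
  qed simp
qed

lemma zpow_in_invariant:
  assumes "S \<subseteq> X" "f ` S = S" "x \<in> S"
  shows "zpow X f n x \<in> S"
  using self_bijection.zpow_in[OF self_bijection_invariant_subset] zpow_restrict assms by metis

lemma image_complement: "S \<subseteq> X \<Longrightarrow> f ` S = S \<Longrightarrow> f ` (X - S) = X - S"
  using inj_on_image_set_diff[OF inj, of X S] image_eq by simp

end

section \<open>Finite invariant sets of expansive homeomorphisms\<close>

lemma finite_separated:
  fixes K :: "'a::metric_space set"
  assumes "finite K"
  obtains s where "s > 0" "\<And>k k'. k \<in> K \<Longrightarrow> k' \<in> K \<Longrightarrow> k \<noteq> k' \<Longrightarrow> s \<le> dist k k'"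
proof
  define D where "D = insert 1 {dist k k' |k k'. k \<in> K \<and> k' \<in> K \<and> k \<noteq> k'}"
  have "{dist k k' |k k'. k \<in> K \<and> k' \<in> K \<and> k \<noteq> k'} \<subseteq> (\<lambda>(k, k'). dist k k') ` (K \<times> K)"
    by auto
  then have "finite D"
    unfolding D_def using assms by (meson finite_SigmaI finite_imageI finite_insert finite_subset)
  then show "Min D > 0"
    by (auto simp: D_def)
  show "Min D \<le> dist k k'" if "k \<in> K" "k' \<in> K" "k \<noteq> k'" for k k'
    using \<open>finite D\<close> that by (intro Min_le) (auto simp: D_def)
qed

lemma uniformly_continuous_on_keeps_apart:
  fixes h :: "'a::metric_space \<Rightarrow> 'b::metric_space"
  assumes "uniformly_continuous_on X h" "s > 0"
  obtains \<epsilon> where "\<epsilon> > 0"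
    "\<And>u v k k'. u \<in> X \<Longrightarrow> v \<in> X \<Longrightarrow> k \<in> X \<Longrightarrow> k' \<in> X \<Longrightarrow> s \<le> dist (h k) (h k') \<Longrightarrow>
       dist u k < \<epsilon> \<Longrightarrow> dist v k' < \<epsilon> \<Longrightarrow> s / 2 < dist (h u) (h v)"
proof -
  obtain \<epsilon> where "\<epsilon> > 0"
    and \<epsilon>: "\<And>u k. u \<in> X \<Longrightarrow> k \<in> X \<Longrightarrow> dist u k < \<epsilon> \<Longrightarrow> dist (h u) (h k) < s / 4"
    using assms unfolding uniformly_continuous_on_def by (metis zero_less_divide_iff zero_less_numeral)
  show thesis
  proof (rule that[OF \<open>\<epsilon> > 0\<close>])
    fix u v k k' assume "u \<in> X" "v \<in> X" "k \<in> X" "k' \<in> X" "s \<le> dist (h k) (h k')"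
      "dist u k < \<epsilon>" "dist v k' < \<epsilon>"
    then show "s / 2 < dist (h u) (h v)"
      using \<epsilon>[of u k] \<epsilon>[of v k'] dist_triangle[of "h k" "h k'" "h u"] dist_triangle[of "h u" "h k'" "h v"]
      by (simp add: dist_commute)
  qed
qed

lemma compatible_metric_mball_subset_ball:
  fixes S :: "'a::metric_space set"
  assumes "compatible_metric (top_of_set S) d" "a \<in> S" "r > 0"
  obtains e where "e > 0" "Metric_space.mball S d a e \<subseteq> ball a r"
proof -
  interpret Metric_space S d
    using assms(1) by (simp add: compatible_metric_def)
  have "openin mtopology (S \<inter> ball a r)"
    using assms(1) by (simp add: compatible_metric_def openin_open_Int)
  moreover have "a \<in> S \<inter> ball a r"
    using assms(2,3) by simp
  ultimately obtain e where "e > 0" "mball a e \<subseteq> S \<inter> ball a r"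
    unfolding openin_mtopology by blast
  then show thesis
    by (intro that[of e]) auto
qed

text \<open>A Lebesgue number argument: C is covered by finitely many d-balls, each lying inside a
  ball of radius r / 2.\<close>
lemma compatible_metric_finer_near_compact:
  fixes S C :: "'a::metric_space set"
  assumes "compatible_metric (top_of_set S) d" "compact C" "C \<subseteq> S" "r > 0"
  obtains \<eta> where "\<eta> > 0" "\<And>a b. a \<in> C \<Longrightarrow> b \<in> S \<Longrightarrow> d a b < \<eta> \<Longrightarrow> dist a b < r"
proof -
  interpret Metric_space S d
    using assms(1) by (simp add: compatible_metric_def)
  have "\<exists>e>0. mball a (2 * e) \<subseteq> ball a (r / 2)" if a: "a \<in> C" for a
  proof -
    have "a \<in> S" "r / 2 > 0"
      using a assms(3,4) by auto
    then obtain e where "e > 0" "mball a e \<subseteq> ball a (r / 2)"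
      by (metis compatible_metric_mball_subset_ball[OF assms(1)])
    then show ?thesis
      by (intro exI[of _ "e / 2"]) auto
  qed
  then obtain e where e: "\<And>a. a \<in> C \<Longrightarrow> e a > 0 \<and> mball a (2 * e a) \<subseteq> ball a (r / 2)"
    by metis
  have "mtopology = top_of_set S"
    using assms(1) by (simp add: compatible_metric_def)
  then have "compactin mtopology C"
    using assms(2,3) by (simp add: compactin_subtopology)
  moreover have "C \<subseteq> \<Union> ((\<lambda>a. mball a (e a)) ` C)"
    using e assms(3) by force
  ultimately have "\<exists>\<F>. finite \<F> \<and> \<F> \<subseteq> (\<lambda>a. mball a (e a)) ` C \<and> C \<subseteq> \<Union>\<F>"
    by (intro compactinD) auto
  then obtain F where F: "finite F" "F \<subseteq> C" "C \<subseteq> \<Union> ((\<lambda>a. mball a (e a)) ` F)"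
    using finite_subset_image[of _ "\<lambda>a. mball a (e a)" C] by metis
  define \<eta> where "\<eta> = Min (insert 1 (e ` F))"
  show thesis
  proof
    show "\<eta> > 0"
      using F e by (auto simp: \<eta>_def)
    fix a b assume "a \<in> C" "b \<in> S" "d a b < \<eta>"
    then obtain c where c: "c \<in> F" "a \<in> mball c (e c)"
      using F by blast
    have "\<eta> \<le> e c"
      using F c by (simp add: \<eta>_def)
    then have "d c b < 2 * e c"
      using c \<open>b \<in> S\<close> \<open>d a b < \<eta>\<close> triangle[of c a b] by auto
    then have "a \<in> ball c (r / 2)" "b \<in> ball c (r / 2)"
      using c e[of c] F \<open>b \<in> S\<close> by fastforce+
    then show "dist a b < r"
      using dist_triangle_half_r[of c a r b] by simp
  qed
qed

locale expansive_homeomorphism = self_bijection X f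
  for X :: "'a::metric_space set" and f +
  assumes compact: "compact X" and continuous: "continuous_on X f"
    and expansive: "\<exists>\<delta>>0. \<forall>x\<in>X. \<forall>y\<in>X. (\<forall>n. dist (zpow X f n x) (zpow X f n y) \<le> \<delta>) \<longrightarrow> x = y"
begin

lemma uniformly_continuous: "uniformly_continuous_on X f"
  using continuous compact by (rule compact_uniformly_continuous)

lemma uniformly_continuous_inverse: "uniformly_continuous_on X (inv_into X f)"
proof -
  have "continuous_on X (inv_into X f)"
    using continuous_on_inv[OF continuous compact] inj image_eq by simp
  then show ?thesis
    using compact by (rule compact_uniformly_continuous)
qed

lemma inj_inverse: "inj_on (inv_into X f) X"
  by (simp add: inj_on_inv_into image_eq)

end

locale finite_invariant_set = expansive_homeomorphism X f for X f +
  fixes K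
  assumes finite: "finite K" and subset: "K \<subseteq> X" and invariant: "f ` K \<subseteq> K"
begin

lemma image_K: "f ` K = K"
  using endo_inj_surj[OF finite invariant inj_on_subset[OF inj subset]] .

lemma zpow_in_K: "k \<in> K \<Longrightarrow> zpow X f n k \<in> K"
  using zpow_in_invariant[OF subset image_K] .

lemma inverse_in_K: "k \<in> K \<Longrightarrow> inv_into X f k \<in> K"
  using zpow_in_K[of k "-1"] zpow_pred[of k 0] subset by auto

lemma zpow_complement:
  assumes "x \<in> X - K"
  shows "zpow (X - K) f n x = zpow X f n x" "zpow X f n x \<in> X - K"
  using zpow_restrict[of "X - K"] zpow_in_invariant[of "X - K"] image_complement[OF subset image_K] assms
  by auto

text \<open>Such a sequence jumps by less than the separation of K, so it is an orbit.\<close>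
lemma sequence_near_orbit_in_K:
  obtains \<epsilon> where "\<epsilon> > 0"
    "\<And>x \<kappa> n. x \<in> X \<Longrightarrow> (\<And>n. \<kappa> n \<in> K) \<Longrightarrow> (\<And>n. dist (zpow X f n x) (\<kappa> n) < \<epsilon>) \<Longrightarrow>
       \<kappa> n = zpow X f n (\<kappa> 0)"
proof -
  obtain s where "s > 0" and sep: "\<And>k k'. k \<in> K \<Longrightarrow> k' \<in> K \<Longrightarrow> k \<noteq> k' \<Longrightarrow> s \<le> dist k k'"
    using finite_separated[OF finite] by blast
  obtain \<eta> where "\<eta> > 0" and \<eta>: "\<forall>u\<in>X. \<forall>v\<in>X. dist u v < \<eta> \<longrightarrow> dist (f u) (f v) < s / 2"
    using uniformly_continuous \<open>s > 0\<close> unfolding uniformly_continuous_on_def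
    by (meson half_gt_zero)
  show thesis
  proof (rule that[of "min \<eta> (s / 2)"])
    show "min \<eta> (s / 2) > 0"
      using \<open>\<eta> > 0\<close> \<open>s > 0\<close> by simp
    fix x \<kappa> n assume x: "x \<in> X" and \<kappa>: "\<And>n. \<kappa> n \<in> K"
      and near: "\<And>n. dist (zpow X f n x) (\<kappa> n) < min \<eta> (s / 2)"
    have \<kappa>X: "\<kappa> n \<in> X" for n
      using \<kappa> subset by blast
    have "\<kappa> (n + 1) = f (\<kappa> n)" for n
    proof (rule ccontr)
      assume "\<kappa> (n + 1) \<noteq> f (\<kappa> n)"
      moreover have "f (\<kappa> n) \<in> K"
        using invariant \<kappa> by blast
      ultimately have "s \<le> dist (f (\<kappa> n)) (\<kappa> (n + 1))"
        using sep \<kappa> by metis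
      moreover have "dist (\<kappa> n) (zpow X f n x) < \<eta>"
        using near[of n] by (simp add: dist_commute)
      then have "dist (f (\<kappa> n)) (zpow X f (n + 1) x) < s / 2"
        using \<eta> \<kappa>X zpow_in[OF x] zpow_succ[OF x] by simp
      moreover have "dist (zpow X f (n + 1) x) (\<kappa> (n + 1)) < s / 2"
        using near[of "n + 1"] by simp
      ultimately show False
        using dist_triangle[of "f (\<kappa> n)" "\<kappa> (n + 1)" "zpow X f (n + 1) x"] by (simp add: dist_commute)
    qed
    then show "\<kappa> n = zpow X f n (\<kappa> 0)"
      using eq_zpow_if_step \<kappa>X by blast
  qed
qed

lemma orbit_near_K_imp_in_K:
  obtains \<epsilon> where "\<epsilon> > 0"
    "\<And>x. x \<in> X \<Longrightarrow> (\<And>n. \<exists>k\<in>K. dist (zpow X f n x) k < \<epsilon>) \<Longrightarrow> x \<in> K"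
proof -
  obtain \<delta> where "\<delta> > 0"
    and \<delta>: "\<forall>x\<in>X. \<forall>y\<in>X. (\<forall>n. dist (zpow X f n x) (zpow X f n y) \<le> \<delta>) \<longrightarrow> x = y"
    using expansive by blast
  obtain \<epsilon> where "\<epsilon> > 0" and orbit: "\<And>x \<kappa> n. x \<in> X \<Longrightarrow> (\<And>n. \<kappa> n \<in> K) \<Longrightarrow>
      (\<And>n. dist (zpow X f n x) (\<kappa> n) < \<epsilon>) \<Longrightarrow> \<kappa> n = zpow X f n (\<kappa> 0)"
    using sequence_near_orbit_in_K by blast
  show thesis
  proof (rule that[of "min \<delta> \<epsilon>"])
    show "min \<delta> \<epsilon> > 0"
      using \<open>\<delta> > 0\<close> \<open>\<epsilon> > 0\<close> by simp
    fix x assume x: "x \<in> X" and near: "\<And>n. \<exists>k\<in>K. dist (zpow X f n x) k < min \<delta> \<epsilon>"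
    then obtain \<kappa> where \<kappa>: "\<And>n. \<kappa> n \<in> K" "\<And>n. dist (zpow X f n x) (\<kappa> n) < min \<delta> \<epsilon>"
      by metis
    have "\<And>n. dist (zpow X f n x) (\<kappa> n) < \<epsilon>"
      using \<kappa>(2) by simp
    then have "\<kappa> n = zpow X f n (\<kappa> 0)" for n
      by (rule orbit[OF x \<kappa>(1)])
    then have "dist (zpow X f n x) (zpow X f n (\<kappa> 0)) \<le> \<delta>" for n
      using \<kappa>(2)[of n] by (metis less_imp_le min_less_iff_conj)
    then have "x = \<kappa> 0"
      using \<delta> x \<kappa>(1) subset by blast
    then show "x \<in> K"
      using \<kappa>(1) by simp
  qed
qed

lemma dyn_isolated: "dyn_isolated (top_of_set X) f K"
proof -
  obtain \<epsilon> where "\<epsilon> > 0"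
    and shadow: "\<And>x. x \<in> X \<Longrightarrow> (\<And>n. \<exists>k\<in>K. dist (zpow X f n x) k < \<epsilon>) \<Longrightarrow> x \<in> K"
    using orbit_near_K_imp_in_K by blast
  define U where "U = X \<inter> (\<Union>k\<in>K. ball k \<epsilon>)"
  have "openin (top_of_set X) U" "U \<subseteq> X"
    by (auto simp: U_def openin_open_Int open_UN)
  moreover have "K \<subseteq> U"
    using subset \<open>\<epsilon> > 0\<close> by (auto simp: U_def)
  moreover have "(\<Inter>n. zpow X f n ` U) = K"
  proof (intro set_eqI iffI)
    fix x assume "x \<in> (\<Inter>n. zpow X f n ` U)"
    then have "x \<in> X" "\<And>n. zpow X f n x \<in> U"
      using mem_Inter_zpow_image[OF \<open>U \<subseteq> X\<close>] by auto
    then show "x \<in> K"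
      using shadow by (force simp: U_def dist_commute)
  next
    fix x assume "x \<in> K"
    then show "x \<in> (\<Inter>n. zpow X f n ` U)"
      using mem_Inter_zpow_image[OF \<open>U \<subseteq> X\<close>] zpow_in_K \<open>K \<subseteq> U\<close> subset by blast
  qed
  ultimately show ?thesis
    unfolding dyn_isolated_def by (intro exI[of _ U]) simp
qed

lemma near_distinct_points_move_apart:
  assumes "s > 0" and sep: "\<And>k k'. k \<in> K \<Longrightarrow> k' \<in> K \<Longrightarrow> k \<noteq> k' \<Longrightarrow> s \<le> dist k k'"
  obtains \<epsilon> where "\<epsilon> > 0"
    "\<And>u v k k'. u \<in> X \<Longrightarrow> v \<in> X \<Longrightarrow> k \<in> K \<Longrightarrow> k' \<in> K \<Longrightarrow> k \<noteq> k' \<Longrightarrow>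
       dist u k < \<epsilon> \<Longrightarrow> dist v k' < \<epsilon> \<Longrightarrow>
       s / 2 < dist (f u) (f v) \<and> s / 2 < dist (inv_into X f u) (inv_into X f v)"
proof -
  obtain \<epsilon>\<^sub>1 where "\<epsilon>\<^sub>1 > 0" and \<epsilon>\<^sub>1: "\<And>u v k k'. u \<in> X \<Longrightarrow> v \<in> X \<Longrightarrow> k \<in> X \<Longrightarrow> k' \<in> X \<Longrightarrow>
      s \<le> dist (f k) (f k') \<Longrightarrow> dist u k < \<epsilon>\<^sub>1 \<Longrightarrow> dist v k' < \<epsilon>\<^sub>1 \<Longrightarrow> s / 2 < dist (f u) (f v)"
    using uniformly_continuous_on_keeps_apart[OF uniformly_continuous \<open>s > 0\<close>] by metis
  obtain \<epsilon>\<^sub>2 where "\<epsilon>\<^sub>2 > 0" and \<epsilon>\<^sub>2: "\<And>u v k k'. u \<in> X \<Longrightarrow> v \<in> X \<Longrightarrow> k \<in> X \<Longrightarrow> k' \<in> X \<Longrightarrow>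
      s \<le> dist (inv_into X f k) (inv_into X f k') \<Longrightarrow> dist u k < \<epsilon>\<^sub>2 \<Longrightarrow> dist v k' < \<epsilon>\<^sub>2 \<Longrightarrow>
      s / 2 < dist (inv_into X f u) (inv_into X f v)"
    using uniformly_continuous_on_keeps_apart[OF uniformly_continuous_inverse \<open>s > 0\<close>] by metis
  show thesis
  proof (rule that[of "min \<epsilon>\<^sub>1 \<epsilon>\<^sub>2"])
    show "min \<epsilon>\<^sub>1 \<epsilon>\<^sub>2 > 0"
      using \<open>\<epsilon>\<^sub>1 > 0\<close> \<open>\<epsilon>\<^sub>2 > 0\<close> by simp
    fix u v k k' assume uv: "u \<in> X" "v \<in> X" and kk': "k \<in> K" "k' \<in> K" "k \<noteq> k'"
      and near: "dist u k < min \<epsilon>\<^sub>1 \<epsilon>\<^sub>2" "dist v k' < min \<epsilon>\<^sub>1 \<epsilon>\<^sub>2"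
    have "k \<in> X" "k' \<in> X"
      using kk' subset by auto
    have "f k \<noteq> f k'" "inv_into X f k \<noteq> inv_into X f k'"
      using kk' \<open>k \<in> X\<close> \<open>k' \<in> X\<close> inj inj_inverse by (auto dest: inj_onD)
    moreover have "f k \<in> K" "f k' \<in> K" "inv_into X f k \<in> K" "inv_into X f k' \<in> K"
      using kk' invariant inverse_in_K by auto
    ultimately have "s \<le> dist (f k) (f k')" "s \<le> dist (inv_into X f k) (inv_into X f k')"
      using sep by auto
    then show "s / 2 < dist (f u) (f v) \<and> s / 2 < dist (inv_into X f u) (inv_into X f v)"
      using \<epsilon>\<^sub>1[OF uv \<open>k \<in> X\<close> \<open>k' \<in> X\<close>] \<epsilon>\<^sub>2[OF uv \<open>k \<in> X\<close> \<open>k' \<in> X\<close>] near by simp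
  qed
qed

text \<open>Two points close to distinct points of K are pushed apart by both f and its inverse, so they
  are again close to distinct points of K: once apart near K, two orbits stay so forever.\<close>
lemma apart_orbits_near_K_imp_in_K:
  assumes "r > 0"
  obtains \<epsilon> \<rho> where "\<epsilon> > 0" "\<rho> > 0" "\<rho> \<le> r"
    "\<And>x y n. x \<in> X \<Longrightarrow> y \<in> X \<Longrightarrow> \<rho> < dist (zpow X f n x) (zpow X f n y) \<Longrightarrow>
       (\<And>m. \<rho> < dist (zpow X f m x) (zpow X f m y) \<Longrightarrow>
          (\<exists>k\<in>K. dist (zpow X f m x) k < \<epsilon>) \<and> (\<exists>k\<in>K. dist (zpow X f m y) k < \<epsilon>)) \<Longrightarrow>
       x \<in> K"
proof -
  obtain s\<^sub>0 where "s\<^sub>0 > 0" and sep\<^sub>0: "\<And>k k'. k \<in> K \<Longrightarrow> k' \<in> K \<Longrightarrow> k \<noteq> k' \<Longrightarrow> s\<^sub>0 \<le> dist k k'"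
    using finite_separated[OF finite] by blast
  define s where "s = min s\<^sub>0 (2 * r)"
  have "s > 0" and sep: "\<And>k k'. k \<in> K \<Longrightarrow> k' \<in> K \<Longrightarrow> k \<noteq> k' \<Longrightarrow> s \<le> dist k k'"
    using \<open>s\<^sub>0 > 0\<close> \<open>r > 0\<close> sep\<^sub>0 by (force simp: s_def)+
  obtain \<epsilon>\<^sub>1 where "\<epsilon>\<^sub>1 > 0"
    and shadow: "\<And>x. x \<in> X \<Longrightarrow> (\<And>n. \<exists>k\<in>K. dist (zpow X f n x) k < \<epsilon>\<^sub>1) \<Longrightarrow> x \<in> K"
    using orbit_near_K_imp_in_K by blast
  obtain \<epsilon>\<^sub>2 where "\<epsilon>\<^sub>2 > 0" and apart: "\<And>u v k k'. u \<in> X \<Longrightarrow> v \<in> X \<Longrightarrow> k \<in> K \<Longrightarrow> k' \<in> K \<Longrightarrow>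
      k \<noteq> k' \<Longrightarrow> dist u k < \<epsilon>\<^sub>2 \<Longrightarrow> dist v k' < \<epsilon>\<^sub>2 \<Longrightarrow>
      s / 2 < dist (f u) (f v) \<and> s / 2 < dist (inv_into X f u) (inv_into X f v)"
    using near_distinct_points_move_apart[of s] \<open>s > 0\<close> sep by metis
  define \<epsilon> where "\<epsilon> = min (min \<epsilon>\<^sub>1 \<epsilon>\<^sub>2) (s / 4)"
  show thesis
  proof (rule that[of \<epsilon> "s / 2"])
    show "\<epsilon> > 0" "s / 2 > 0" "s / 2 \<le> r"
      using \<open>\<epsilon>\<^sub>1 > 0\<close> \<open>\<epsilon>\<^sub>2 > 0\<close> \<open>s > 0\<close> by (simp_all add: \<epsilon>_def s_def)
    fix x y n assume "x \<in> X" "y \<in> X" and "s / 2 < dist (zpow X f n x) (zpow X f n y)"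
      and near: "\<And>m. s / 2 < dist (zpow X f m x) (zpow X f m y) \<Longrightarrow>
        (\<exists>k\<in>K. dist (zpow X f m x) k < \<epsilon>) \<and> (\<exists>k\<in>K. dist (zpow X f m y) k < \<epsilon>)"
    let ?x = "\<lambda>m. zpow X f m x" and ?y = "\<lambda>m. zpow X f m y"
    have step: "s / 2 < dist (?x (m + 1)) (?y (m + 1)) \<and> s / 2 < dist (?x (m - 1)) (?y (m - 1))"
      if far: "s / 2 < dist (?x m) (?y m)" for m
    proof -
      obtain k k' where k: "k \<in> K" "k' \<in> K" "dist (?x m) k < \<epsilon>" "dist (?y m) k' < \<epsilon>"
        using near[OF far] by blast
      moreover have "k \<noteq> k'"
        using far k dist_triangle_less_add[of "?x m" k \<epsilon> "?y m" \<epsilon>] by (auto simp: \<epsilon>_def dist_commute)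
      ultimately show ?thesis
        using apart[of "?x m" "?y m" k k'] zpow_in \<open>x \<in> X\<close> \<open>y \<in> X\<close>
        by (simp add: zpow_succ zpow_pred \<epsilon>_def)
    qed
    have "s / 2 < dist (?x m) (?y m)" for m
      by (induction m rule: int_induct[where k = n]) (use \<open>s / 2 < dist (?x n) (?y n)\<close> step in auto)
    then show "x \<in> K"
      using shadow[OF \<open>x \<in> X\<close>] near by (force simp: \<epsilon>_def)
  qed
qed

lemma distinct_orbits_separate_away_from_K:
  obtains \<epsilon> \<rho> where "\<epsilon> > 0" "\<rho> > 0"
    "\<And>x y. x \<in> X - K \<Longrightarrow> y \<in> X \<Longrightarrow> x \<noteq> y \<Longrightarrow>
       \<exists>n. \<rho> < dist (zpow X f n x) (zpow X f n y) \<and>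
         ((\<forall>k\<in>K. \<epsilon> \<le> dist (zpow X f n x) k) \<or> (\<forall>k\<in>K. \<epsilon> \<le> dist (zpow X f n y) k))"
proof -
  obtain \<delta> where "\<delta> > 0"
    and \<delta>: "\<forall>x\<in>X. \<forall>y\<in>X. (\<forall>n. dist (zpow X f n x) (zpow X f n y) \<le> \<delta>) \<longrightarrow> x = y"
    using expansive by blast
  obtain \<epsilon> \<rho> where "\<epsilon> > 0" "\<rho> > 0" "\<rho> \<le> \<delta>"
    and in_K: "\<And>x y n. x \<in> X \<Longrightarrow> y \<in> X \<Longrightarrow> \<rho> < dist (zpow X f n x) (zpow X f n y) \<Longrightarrow>
       (\<And>m. \<rho> < dist (zpow X f m x) (zpow X f m y) \<Longrightarrow>
          (\<exists>k\<in>K. dist (zpow X f m x) k < \<epsilon>) \<and> (\<exists>k\<in>K. dist (zpow X f m y) k < \<epsilon>)) \<Longrightarrow>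
       x \<in> K"
    using apart_orbits_near_K_imp_in_K[OF \<open>\<delta> > 0\<close>] by blast
  show thesis
  proof (rule that[OF \<open>\<epsilon> > 0\<close> \<open>\<rho> > 0\<close>])
    fix x y assume x: "x \<in> X - K" and "y \<in> X" "x \<noteq> y"
    show "\<exists>n. \<rho> < dist (zpow X f n x) (zpow X f n y) \<and>
      ((\<forall>k\<in>K. \<epsilon> \<le> dist (zpow X f n x) k) \<or> (\<forall>k\<in>K. \<epsilon> \<le> dist (zpow X f n y) k))"
    proof (rule ccontr)
      assume "\<not> ?thesis"
      then have near: "(\<exists>k\<in>K. dist (zpow X f m x) k < \<epsilon>) \<and> (\<exists>k\<in>K. dist (zpow X f m y) k < \<epsilon>)"
        if "\<rho> < dist (zpow X f m x) (zpow X f m y)" for m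
        using that by (auto simp: not_le)
      have "dist (zpow X f n x) (zpow X f n y) \<le> \<delta>" for n
        using in_K[of x y n] near x \<open>y \<in> X\<close> \<open>\<rho> \<le> \<delta>\<close> by (meson DiffD1 DiffD2 not_le order_trans)
      then show False
        using \<delta> x \<open>y \<in> X\<close> \<open>x \<noteq> y\<close> by blast
    qed
  qed
qed

lemma mi_expansive_complement: "mi_expansive (top_of_set (X - K)) f"
proof -
  obtain \<epsilon> \<rho> where "\<epsilon> > 0" "\<rho> > 0"
    and separate: "\<And>x y. x \<in> X - K \<Longrightarrow> y \<in> X \<Longrightarrow> x \<noteq> y \<Longrightarrow>
       \<exists>n. \<rho> < dist (zpow X f n x) (zpow X f n y) \<and>
         ((\<forall>k\<in>K. \<epsilon> \<le> dist (zpow X f n x) k) \<or> (\<forall>k\<in>K. \<epsilon> \<le> dist (zpow X f n y) k))"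
    using distinct_orbits_separate_away_from_K by metis
  define C where "C = X - (\<Union>k\<in>K. ball k \<epsilon>)"
  have "compact C"
    unfolding C_def using compact by (intro compact_diff) auto
  have "C \<subseteq> X - K"
    using \<open>\<epsilon> > 0\<close> by (auto simp: C_def)
  have inC: "u \<in> C \<longleftrightarrow> u \<in> X \<and> (\<forall>k\<in>K. \<epsilon> \<le> dist u k)" for u
    by (auto simp: C_def dist_commute not_less)
  show ?thesis
    unfolding mi_expansive_def topspace_euclidean_subtopology
  proof (intro allI impI)
    fix d assume d: "compatible_metric (top_of_set (X - K)) d"
    then interpret Metric_space "X - K" d
      by (simp add: compatible_metric_def)
    obtain \<eta> where "\<eta> > 0" and \<eta>: "\<And>a b. a \<in> C \<Longrightarrow> b \<in> X - K \<Longrightarrow> d a b < \<eta> \<Longrightarrow> dist a b < \<rho>"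
      using compatible_metric_finer_near_compact[OF d \<open>compact C\<close> \<open>C \<subseteq> X - K\<close> \<open>\<rho> > 0\<close>] by metis
    show "\<exists>c>0. \<forall>x\<in>X - K. \<forall>y\<in>X - K. x \<noteq> y \<longrightarrow>
      (\<exists>n. c < d (zpow (X - K) f n x) (zpow (X - K) f n y))"
    proof (intro exI[of _ "\<eta> / 2"] conjI ballI impI)
      show "\<eta> / 2 > 0"
        using \<open>\<eta> > 0\<close> by simp
      fix x y assume x: "x \<in> X - K" and y: "y \<in> X - K" and "x \<noteq> y"
      then obtain n where far: "\<rho> < dist (zpow X f n x) (zpow X f n y)"
        and "zpow X f n x \<in> C \<or> zpow X f n y \<in> C"
        using separate[of x y] inC zpow_complement(2) by blast
      moreover have "d (zpow X f n x) (zpow X f n y) = d (zpow X f n y) (zpow X f n x)"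
        using commute zpow_complement(2) x y by blast
      ultimately have "\<eta> \<le> d (zpow X f n x) (zpow X f n y)"
        using \<eta> zpow_complement(2) x y by (metis dist_commute not_le order_less_asym)
      then show "\<exists>n. \<eta> / 2 < d (zpow (X - K) f n x) (zpow (X - K) f n y)"
        using \<open>\<eta> > 0\<close> zpow_complement(1) x y by (intro exI[of _ n]) simp
    qed
  qed
qed

end

section \<open>Bounded solutions of a hyperbolic linear recurrence\<close>

lemma power_mult_bounded_imp_zero:
  fixes m x :: real
  assumes "1 < m" "0 \<le> x" "\<And>k. m ^ k * x \<le> B"
  shows "x = 0"
proof (rule ccontr)
  assume "x \<noteq> 0"
  obtain k where "B / x < m ^ k"
    using real_arch_pow[OF \<open>1 < m\<close>] by blast
  then show False
    using assms(2) assms(3)[of k] \<open>x \<noteq> 0\<close> by (simp add: divide_less_eq)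
qed

lemma bounded_geometric_sequence_zero:
  fixes u :: "int \<Rightarrow> 'a::real_normed_vector"
  assumes "0 < l" "l \<noteq> 1" and step: "\<And>n. u (n + 1) = l *\<^sub>R u n" and bound: "\<And>n. norm (u n) \<le> B"
  shows "u 0 = 0"
proof -
  have "l \<noteq> 0"
    using \<open>0 < l\<close> by simp
  show ?thesis
  proof (cases "1 < l")
    case True
    have "u (int k) = l ^ k *\<^sub>R u 0" for k
    proof (induction k)
      case (Suc k)
      then show ?case
        using step[of "int k"] by (simp add: add.commute)
    qed simp
    then have "l ^ k * norm (u 0) \<le> B" for k
      using bound[of "int k"] \<open>0 < l\<close> by simp
    then have "norm (u 0) = 0"
      by (intro power_mult_bounded_imp_zero[OF True]) auto
    then show ?thesis
      by simp
  next
    case False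
    have "u (- int k) = (1 / l) ^ k *\<^sub>R u 0" for k
    proof (induction k)
      case (Suc k)
      have "u (- int k) = l *\<^sub>R u (- int (Suc k))"
        using step[of "- int (Suc k)"] by simp
      then have "u (- int (Suc k)) = (1 / l) *\<^sub>R u (- int k)"
        using \<open>l \<noteq> 0\<close> by simp
      then show ?case
        using Suc by simp
    qed simp
    then have "(1 / l) ^ k * norm (u 0) \<le> B" for k
      using bound[of "- int k"] \<open>0 < l\<close> by simp
    moreover have "1 < 1 / l"
      using False assms(1,2) by simp
    ultimately have "norm (u 0) = 0"
      by (intro power_mult_bounded_imp_zero[of "1 / l"]) auto
    then show ?thesis
      by simp
  qed
qed

text \<open>For a root c of
  c^2 + c = 1, the combination a + c b is an eigen-coordinate with eigenvalue 2 + c; the two roots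
  give eigenvalues (3 \<plusminus> sqrt 5) / 2, one expanding and one contracting.\<close>
lemma cat_recurrence_bounded_zero:
  fixes a b :: "int \<Rightarrow> 'a::real_normed_vector"
  assumes rec: "\<And>n. a (n + 1) = 2 *\<^sub>R a n + b n" "\<And>n. b (n + 1) = a n + b n"
    and bound: "\<And>n. norm (a n) \<le> B" "\<And>n. norm (b n) \<le> B"
  shows "a 0 = 0 \<and> b 0 = 0"
proof -
  have eigen: "a 0 + c *\<^sub>R b 0 = 0" if c: "c\<^sup>2 + c = 1" and "0 < 2 + c" "2 + c \<noteq> 1" for c
  proof (rule bounded_geometric_sequence_zero[where l = "2 + c" and B = "B + \<bar>c\<bar> * B"])
    have "(2 + c) * c = 1 + c"
      using c by (simp add: power2_eq_square algebra_simps)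
    show "a (n + 1) + c *\<^sub>R b (n + 1) = (2 + c) *\<^sub>R (a n + c *\<^sub>R b n)" for n
    proof -
      have "a (n + 1) + c *\<^sub>R b (n + 1) = (2 + c) *\<^sub>R a n + (1 + c) *\<^sub>R b n"
        unfolding rec by (simp add: algebra_simps)
      also have "\<dots> = (2 + c) *\<^sub>R (a n + c *\<^sub>R b n)"
        using \<open>(2 + c) * c = 1 + c\<close> by (simp add: scaleR_add_right)
      finally show ?thesis .
    qed
    show "norm (a n + c *\<^sub>R b n) \<le> B + \<bar>c\<bar> * B" for n
      using norm_triangle_ineq[of "a n" "c *\<^sub>R b n"] bound[of n]
        mult_left_mono[OF bound(2)[of n], of "\<bar>c\<bar>"] by simp
  qed fact+
  define r where "r = sqrt 5"
  have r: "r * r = 5" "2 < r" "r < 3"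
    using real_less_rsqrt[of 2 5] real_less_lsqrt[of 3 5] by (simp_all add: r_def)
  have "a 0 + ((r - 1) / 2) *\<^sub>R b 0 = 0"
    by (rule eigen) (use r in \<open>simp_all add: power2_eq_square field_simps\<close>)
  moreover have "a 0 + ((- r - 1) / 2) *\<^sub>R b 0 = 0"
    by (rule eigen) (use r in \<open>simp_all add: power2_eq_square field_simps\<close>)
  ultimately have "((r - 1) / 2) *\<^sub>R b 0 = ((- r - 1) / 2) *\<^sub>R b 0"
    by (metis add_left_cancel)
  then have "b 0 = 0"
    using r by (simp add: scaleR_cancel_right)
  then show ?thesis
    using \<open>a 0 + ((r - 1) / 2) *\<^sub>R b 0 = 0\<close> by simp
qed


lemma exp_eq_imp_eq_if_close:
  fixes u v :: complex
  assumes "exp u = exp v" "norm (u - v) < 2 * pi"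
  shows "u = v"
proof -
  obtain k :: int where k: "u = v + (of_int (2 * k) * pi) * \<i>"
    using assms(1) exp_eq by blast
  then have "norm (u - v) = 2 * pi * \<bar>of_int k\<bar>"
    by (simp add: norm_mult abs_mult)
  then have "\<bar>real_of_int k\<bar> < 1"
    using assms(2) by simp
  then show ?thesis
    using k by simp
qed

text \<open>Near the fixed point (1, 1) the principal logarithm linearises the cat map.\<close>
lemma cat_recurrence_near_one:
  obtains \<delta> :: real where "\<delta> > 0"
    "\<And>z w :: int \<Rightarrow> complex. (\<And>n. z (n + 1) = z n ^ 2 * w n) \<Longrightarrow> (\<And>n. w (n + 1) = z n * w n) \<Longrightarrow>
       (\<And>n. dist (z n) 1 \<le> \<delta> \<and> dist (w n) 1 \<le> \<delta>) \<Longrightarrow> z 0 = 1 \<and> w 0 = 1"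
proof -
  have "continuous (at 1) Ln"
    by (rule continuous_at_Ln) (auto simp: nonpos_Reals_def)
  then obtain d where "d > 0" and d: "\<And>\<zeta>. dist \<zeta> 1 < d \<Longrightarrow> dist (Ln \<zeta>) (Ln 1) < 1 / 4"
    unfolding continuous_at_eps_delta by (meson divide_pos_pos zero_less_numeral zero_less_one)
  show thesis
  proof (rule that[of "min (d / 2) (1 / 2)"])
    show "min (d / 2) (1 / 2) > 0"
      using \<open>d > 0\<close> by simp
    fix z w :: "int \<Rightarrow> complex"
    assume rec: "\<And>n. z (n + 1) = z n ^ 2 * w n" "\<And>n. w (n + 1) = z n * w n"
      and near: "\<And>n. dist (z n) 1 \<le> min (d / 2) (1 / 2) \<and> dist (w n) 1 \<le> min (d / 2) (1 / 2)"
    define a where "a n = Ln (z n)" for n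
    define b where "b n = Ln (w n)" for n
    have "z n \<noteq> 0" "w n \<noteq> 0" for n
      using near[of n] by (auto simp: dist_norm)
    then have exp_ab: "exp (a n) = z n" "exp (b n) = w n" for n
      by (simp_all add: a_def b_def)
    have small: "norm (a n) < 1 / 4" "norm (b n) < 1 / 4" for n
      using near[of n] d[of "z n"] d[of "w n"] \<open>d > 0\<close> by (auto simp: a_def b_def dist_norm)
    have "a (n + 1) = 2 *\<^sub>R a n + b n" for n
    proof (rule exp_eq_imp_eq_if_close)
      show "exp (a (n + 1)) = exp (2 *\<^sub>R a n + b n)"
        using rec(1)[of n] exp_of_nat_mult[of 2 "a n"] by (simp add: exp_ab exp_add scaleR_conv_of_real)
      show "norm (a (n + 1) - (2 *\<^sub>R a n + b n)) < 2 * pi"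
        using norm_triangle_ineq4[of "a (n + 1)" "2 *\<^sub>R a n + b n"] norm_triangle_ineq[of "2 *\<^sub>R a n" "b n"]
          small[of n] small[of "n + 1"] pi_gt3 by simp
    qed
    moreover have "b (n + 1) = a n + b n" for n
    proof (rule exp_eq_imp_eq_if_close)
      show "exp (b (n + 1)) = exp (a n + b n)"
        using rec(2)[of n] by (simp add: exp_ab exp_add)
      show "norm (b (n + 1) - (a n + b n)) < 2 * pi"
        using norm_triangle_ineq4[of "b (n + 1)" "a n + b n"] norm_triangle_ineq[of "a n" "b n"]
          small[of n] small[of "n + 1"] pi_gt3 by simp
    qed
    ultimately have "a 0 = 0 \<and> b 0 = 0"
      using small by (intro cat_recurrence_bounded_zero[where B = "1 / 4"]) (auto intro: less_imp_le)
    then show "z 0 = 1 \<and> w 0 = 1"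
      using exp_ab[of 0] by simp
  qed
qed

section \<open>The cat map\<close>

lemma torus_eq: "torus = sphere 0 1 \<times> sphere 0 1"
  by (auto simp: torus_def)

lemma compact_torus: "compact torus"
  by (simp add: torus_eq compact_Times)

lemma continuous_on_cat_map: "continuous_on torus cat_map"
  unfolding cat_map_def by (intro continuous_intros)

lemma bij_cat_map: "bij_betw cat_map torus torus"
proof -
  have "inj_on cat_map torus"
  proof (rule inj_onI)
    fix p q assume "p \<in> torus" "q \<in> torus" and eq: "cat_map p = cat_map q"
    then have nz: "fst p \<noteq> 0" "snd p \<noteq> 0" "fst q \<noteq> 0" "snd q \<noteq> 0"
      by (auto simp: torus_def)
    have "fst p = fst p ^ 2 * snd p / (fst p * snd p)"
      using nz by (simp add: power2_eq_square)
    also have "\<dots> = fst q ^ 2 * snd q / (fst q * snd q)"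
      using eq by (simp add: cat_map_def)
    also have "\<dots> = fst q"
      using nz by (simp add: power2_eq_square)
    finally have "fst p = fst q" .
    moreover have "snd p = snd q"
      using eq nz calculation by (simp add: cat_map_def)
    ultimately show "p = q"
      by (simp add: prod_eq_iff)
  qed
  moreover have "cat_map ` torus = torus"
  proof
    show "cat_map ` torus \<subseteq> torus"
      by (auto simp: torus_def cat_map_def norm_mult norm_power)
    show "torus \<subseteq> cat_map ` torus"
    proof
      fix q assume q: "q \<in> torus"
      then have nz: "fst q \<noteq> 0" "snd q \<noteq> 0"
        by (auto simp: torus_def)
      have "(fst q / snd q, snd q ^ 2 / fst q) \<in> torus"
        using q by (auto simp: torus_def norm_divide norm_power)
      moreover have "q = cat_map (fst q / snd q, snd q ^ 2 / fst q)"
        using nz by (simp add: cat_map_def prod_eq_iff power2_eq_square field_simps)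
      ultimately show "q \<in> cat_map ` torus"
        by blast
    qed
  qed
  ultimately show ?thesis
    by (simp add: bij_betw_def)
qed

lemma norm_divide_minus_one:
  fixes u v :: complex
  assumes "norm v = 1"
  shows "norm (u / v - 1) = norm (u - v)"
proof -
  have "v \<noteq> 0"
    using assms by auto
  then have "u / v - 1 = (u - v) / v"
    by (simp add: diff_divide_distrib)
  then show ?thesis
    using assms by (simp add: norm_divide)
qed

interpretation cat: self_bijection torus cat_map
  by unfold_locales (rule bij_cat_map)

lemma cat_map_expansive:
  "\<exists>\<delta>>0. \<forall>x\<in>torus. \<forall>y\<in>torus.
     (\<forall>n. dist (zpow torus cat_map n x) (zpow torus cat_map n y) \<le> \<delta>) \<longrightarrow> x = y"
proof -
  obtain \<delta> :: real where "\<delta> > 0" and \<delta>: "\<And>z w :: int \<Rightarrow> complex.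
      (\<And>n. z (n + 1) = z n ^ 2 * w n) \<Longrightarrow> (\<And>n. w (n + 1) = z n * w n) \<Longrightarrow>
      (\<And>n. dist (z n) 1 \<le> \<delta> \<and> dist (w n) 1 \<le> \<delta>) \<Longrightarrow> z 0 = 1 \<and> w 0 = 1"
    using cat_recurrence_near_one by metis
  show ?thesis
  proof (intro exI[of _ \<delta>] conjI ballI impI)
    show "\<delta> > 0" by fact
    fix x y assume "x \<in> torus" "y \<in> torus"
      and close: "\<forall>n. dist (zpow torus cat_map n x) (zpow torus cat_map n y) \<le> \<delta>"
    \<comment> \<open>cat_map is an endomorphism of the torus group, so the quotient of two orbits is an orbit\<close>
    define z where "z n = fst (zpow torus cat_map n x) / fst (zpow torus cat_map n y)" for n
    define w where "w n = snd (zpow torus cat_map n x) / snd (zpow torus cat_map n y)" for n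
    have unit: "norm (fst (zpow torus cat_map n p)) = 1" "norm (snd (zpow torus cat_map n p)) = 1"
      if "p \<in> torus" for n p
      using cat.zpow_in[OF that, of n] by (auto simp: torus_def)
    have "z (n + 1) = z n ^ 2 * w n" "w (n + 1) = z n * w n" for n
      using unit[OF \<open>y \<in> torus\<close>, of n]
      by (auto simp: z_def w_def cat.zpow_succ \<open>x \<in> torus\<close> \<open>y \<in> torus\<close> cat_map_def power2_eq_square)
    moreover have "dist (z n) 1 \<le> \<delta> \<and> dist (w n) 1 \<le> \<delta>" for n
    proof -
      have "dist (z n) 1 = dist (fst (zpow torus cat_map n x)) (fst (zpow torus cat_map n y))"
        "dist (w n) 1 = dist (snd (zpow torus cat_map n x)) (snd (zpow torus cat_map n y))"
        using unit[OF \<open>y \<in> torus\<close>, of n]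
        by (simp_all add: z_def w_def dist_norm norm_divide_minus_one)
      then show ?thesis
        using close dist_fst_le dist_snd_le order_trans by metis
    qed
    ultimately have "z 0 = 1" "w 0 = 1"
      using \<delta> by blast+
    then show "x = y"
      using unit[OF \<open>y \<in> torus\<close>, of 0] by (simp add: z_def w_def prod_eq_iff)
  qed
qed


lemma expansive_homeomorphism_cat_map: "expansive_homeomorphism torus cat_map"
  unfolding expansive_homeomorphism_def expansive_homeomorphism_axioms_def
  by (intro conjI cat.self_bijection_axioms compact_torus continuous_on_cat_map cat_map_expansive)

theorem mainTheorem15:
  fixes p :: "complex \<times> complex" and K :: "(complex \<times> complex) set"
  assumes "p \<in> torus"
    and "\<exists>n>0. (cat_map ^^ n) p = p"
    and "K = {(cat_map ^^ k) p | k. True}"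
  shows "dyn_isolated torus_top cat_map K
         \<and> mi_expansive (subtopology torus_top (torus - K)) cat_map"
proof -
  obtain N where "(cat_map ^^ N) p = p" "N > 0"
    using assms(2) by blast
  then have "finite K"
    unfolding assms(3) by (rule finite_periodic_orbit)
  moreover have "K \<subseteq> torus"
    unfolding assms(3) using cat.funpow_in assms(1) by blast
  moreover have "cat_map ` K \<subseteq> K"
    unfolding assms(3) by (rule orbit_invariant)
  ultimately interpret finite_invariant_set torus cat_map K
    using expansive_homeomorphism_cat_map
    by (simp add: finite_invariant_set_def finite_invariant_set_axioms_def)
  have "subtopology torus_top (torus - K) = top_of_set (torus - K)"
    by (simp add: torus_top_def subtopology_subtopology Int_absorb1)
  then show ?thesis
    using dyn_isolated mi_expansive_complement by (simp add: torus_top_def)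
qed

end
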